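(* Let $d$ be a non-negative integer, $Z$ a finite abelian group, $\mu$ the Haar probability measure on $\mathbb{T}^d\times Z$, and $\alpha$ a real number. Let $A,B$ be closed subsets of $\mathbb{T}^d\times Z$ satisfying $0<\mu(A+B)\leq\alpha\,\mu(A)$. For each positive integer $n$ let $A_n=A+\big([-\tfrac1n,\tfrac1n]^d\times\{0_Z\}\big)$. Then for every $\epsilon>0$, for every sufficiently large $n\in\mathbb{N}$ there exists a non-empty closed subset $A_n'\subset A_n$ such that for every $m\in\mathbb{N}$ we have $\mu(A_n'+mB)\leq (1+\epsilon)^m\alpha^m\mu(A_n')$.
   Context: $\mathbb{T}=\mathbb{R}/\mathbb{Z}$, identified as a set with $[0,1)$ (so $[-\tfrac1n,\tfrac1n]$ denotes its image in $\mathbb{T}$). $mB=\{b_1+\dots+b_m:b_i\in B\}$. *)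

theory Defs
  imports "HOL-Analysis.Analysis" "HOL-Probability.Probability"
begin

text \<open>The torus T^d, with T = R/Z identified with [0,1). Points of T^d are
  represented as extensional functions on the index set {..<d} with values in [0,1)
  (this allows d = 0, where T^0 is a single point).\<close>

definition torus :: "nat \<Rightarrow> (nat \<Rightarrow> real) set" where
  "torus d = PiE {..<d} (\<lambda>_. {0..<1})"

definition tproj :: "nat \<Rightarrow> (nat \<Rightarrow> real) \<Rightarrow> (nat \<Rightarrow> real)" where
  "tproj d v = (\<lambda>i\<in>{..<d}. frac (v i))"

definition gadd :: "nat \<Rightarrow> (nat \<Rightarrow> real) \<times> 'z::ab_group_add \<Rightarrow> (nat \<Rightarrow> real) \<times> 'z \<Rightarrow> (nat \<Rightarrow> real) \<times> 'z" where
  "gadd d p q = (tproj d (\<lambda>i. fst p i + fst q i), snd p + snd q)"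

definition gzero :: "nat \<Rightarrow> (nat \<Rightarrow> real) \<times> 'z::ab_group_add" where
  "gzero d = (tproj d (\<lambda>_. 0), 0)"

definition sumset :: "nat \<Rightarrow> ((nat \<Rightarrow> real) \<times> 'z::ab_group_add) set \<Rightarrow> ((nat \<Rightarrow> real) \<times> 'z) set \<Rightarrow> ((nat \<Rightarrow> real) \<times> 'z) set" where
  "sumset d A B = {gadd d a b | a b. a \<in> A \<and> b \<in> B}"

fun msumset :: "nat \<Rightarrow> nat \<Rightarrow> ((nat \<Rightarrow> real) \<times> 'z::ab_group_add) set \<Rightarrow> ((nat \<Rightarrow> real) \<times> 'z) set" where
  "msumset d 0 B = {gzero d}"
| "msumset d (Suc m) B = sumset d (msumset d m B) B"

definition haar :: "nat \<Rightarrow> ((nat \<Rightarrow> real) \<times> 'z::{ab_group_add,finite}) measure" where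
  "haar d = (PiM {..<d} (\<lambda>_. restrict_space lborel {0..<1::real}))
              \<Otimes>\<^sub>M uniform_count_measure (UNIV :: 'z set)"

text \<open>Closed subsets of T^d \<times> Z (quotient topology on T^d, discrete topology on Z):
  S is closed iff for every z, the preimage in R^d of the fibre over z is closed.
  R^d is realised as the closed subspace {v. \<forall>i\<ge>d. v i = 0} of nat \<Rightarrow> real
  (product topology), on which the topology is the Euclidean one.\<close>
definition tclosed :: "nat \<Rightarrow> ((nat \<Rightarrow> real) \<times> 'z::ab_group_add) set \<Rightarrow> bool" where
  "tclosed d S \<longleftrightarrow> S \<subseteq> torus d \<times> UNIV \<and>
     (\<forall>z. closed {v :: nat \<Rightarrow> real. (\<forall>i\<ge>d. v i = 0) \<and> (tproj d v, z) \<in> S})"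

definition cube :: "nat \<Rightarrow> nat \<Rightarrow> ((nat \<Rightarrow> real) \<times> 'z::ab_group_add) set" where
  "cube d n = {(tproj d v, 0) | v. \<forall>i<d. \<bar>v i\<bar> \<le> 1 / real n}"

end

theory Submission
  imports Defs "HOL-Algebra.Coset"
begin

text \<open>
  Round \<open>A\<close> and \<open>B\<close> down to the grid of mesh \<open>1/k\<close> in \<open>T\<^sup>d\<close>. Let \<open>D\<close> be the rounded \<open>A\<close>, and
  \<open>B\<^sub>k\<close> the rounded \<open>B\<close> plus the corners \<open>{0, 1/k}\<^sup>d\<close> of the cell \<open>[0, 1/k]\<^sup>d\<close>: the corners
  absorb the carries in cell + cell, so that \<open>(X + cell) + mB \<subseteq> (X + mB\<^sub>k) + cell\<close> for every set
  \<open>X\<close> of grid points. Measures of unions of grid cells are, up to the volume of one cell, counts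
  of grid points. Hence Plunnecke's inequality in Petridis' form, applied to the finite sets
  \<open>D\<close> and \<open>B\<^sub>k\<close>, gives a non-empty \<open>X \<subseteq> D\<close> with
  \<open>\<mu>((X + cell) + mB) \<le> K\<^sup>m \<mu>(X + cell)\<close>, where \<open>K = |D + B\<^sub>k| / |D|\<close>. Since \<open>D + B\<^sub>k + cell\<close>
  lies in the \<open>4/k\<close>-neighbourhood of \<open>A + B\<close>, and these neighbourhoods shrink to the closed set
  \<open>A + B\<close>, we get \<open>K \<le> (1 + \<epsilon>) \<mu>(A + B) / \<mu>(A) \<le> (1 + \<epsilon>) \<alpha>\<close> for large \<open>k\<close>. The set
  \<open>A' = X + cell\<close> is closed and lies in the \<open>2/k\<close>-neighbourhood of \<open>A\<close>, which is \<open>A\<^sub>n\<close> for \<open>k = 2n\<close>.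
\<close>

subsection \<open>Plunnecke's inequality in abelian groups\<close>

primrec set_mult_power :: "('a, 'b) monoid_scheme \<Rightarrow> nat \<Rightarrow> 'a set \<Rightarrow> 'a set" where
  "set_mult_power G 0 B = {\<one>\<^bsub>G\<^esub>}"
| "set_mult_power G (Suc m) B = set_mult_power G m B <#>\<^bsub>G\<^esub> B"

lemma finite_set_mult: "finite X \<Longrightarrow> finite Y \<Longrightarrow> finite (X <#>\<^bsub>G\<^esub> Y)"
  unfolding set_mult_def by blast

context comm_group
begin

lemma set_mult_comm:
  assumes "X \<subseteq> carrier G" "Y \<subseteq> carrier G"
  shows "X <#> Y = Y <#> X"
  using assms unfolding set_mult_def by (auto; metis m_comm subsetD)

lemma card_set_mult_singleton:
  assumes "X \<subseteq> carrier G" "c \<in> carrier G"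
  shows "card (X <#> {c}) = card X"
proof -
  have "X <#> {c} = (\<lambda>x. x \<otimes> c) ` X"
    by (auto simp: set_mult_def)
  then show ?thesis
    by (simp add: card_image inj_on_g[OF assms])
qed

lemma set_mult_power_closed: "B \<subseteq> carrier G \<Longrightarrow> set_mult_power G m B \<subseteq> carrier G"
  by (induction m) (simp_all add: set_mult_closed)

lemma finite_set_mult_power: "finite B \<Longrightarrow> finite (set_mult_power G m B)"
  by (induction m) (simp_all add: finite_set_mult)

lemma card_set_mult_insert:
  assumes S: "finite S" "S \<subseteq> carrier G" and C: "finite C" and c: "c \<in> carrier G"
  shows "card (S <#> insert c C) + card {s \<in> S. s \<otimes> c \<in> S <#> C} = card (S <#> C) + card S"
proof -
  define Z where "Z = {s \<in> S. s \<otimes> c \<in> S <#> C}"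
  have Z: "Z \<subseteq> S" "finite Z"
    using S(1) by (auto simp: Z_def)
  have split: "S <#> insert c C = (S <#> C) \<union> ((S - Z) <#> {c})"
    by (auto simp: set_mult_def Z_def)
  have disjoint: "(S <#> C) \<inter> ((S - Z) <#> {c}) = {}"
    by (auto simp: set_mult_def Z_def)
  have "card ((S - Z) <#> {c}) = card S - card Z"
    using Z S c by (subst card_set_mult_singleton) (auto simp: card_Diff_subset)
  then have "card (S <#> insert c C) = card (S <#> C) + (card S - card Z)"
    unfolding split using S C disjoint by (simp add: card_Un_disjoint finite_set_mult)
  then show ?thesis
    using card_mono[OF S(1) Z(1)] by (simp add: Z_def)
qed

lemma card_set_mult_insert_le:
  assumes S: "finite S" "S \<subseteq> carrier G" and C: "finite C" and c: "c \<in> carrier G"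
    and W: "W \<subseteq> S" "W <#> {c} \<subseteq> S <#> C"
  shows "card (S <#> insert c C) + card W \<le> card (S <#> C) + card S"
proof -
  have "w \<otimes> c \<in> S <#> C" if "w \<in> W" for w
    using W(2) that unfolding set_mult_def by blast
  then have "W \<subseteq> {s \<in> S. s \<otimes> c \<in> S <#> C}"
    using W(1) by blast
  then have "card W \<le> card {s \<in> S. s \<otimes> c \<in> S <#> C}"
    using S(1) by (intro card_mono) auto
  then show ?thesis
    using card_set_mult_insert[OF S C c] by linarith
qed

lemma singleton_set_mult_subset:
  assumes G: "x \<in> carrier G" "c \<in> carrier G" "B \<subseteq> carrier G" "X \<subseteq> carrier G" "C \<subseteq> carrier G"
    and "x \<otimes> c \<in> X <#> C"
  shows "{x} <#> B <#> {c} \<subseteq> X <#> B <#> C"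
proof
  fix y assume "y \<in> {x} <#> B <#> {c}"
  then obtain b where b: "b \<in> B" and y: "y = x \<otimes> b \<otimes> c"
    by (auto simp: set_mult_def)
  obtain x' c' where x': "x' \<in> X" "c' \<in> C" "x \<otimes> c = x' \<otimes> c'"
    using assms(6) by (auto simp: set_mult_def)
  have carrier: "b \<in> carrier G" "x' \<in> carrier G" "c' \<in> carrier G"
    using b x' G by auto
  have "y = (x \<otimes> c) \<otimes> b"
    using G(1,2) carrier unfolding y by (simp add: m_ac)
  also have "\<dots> = (x' \<otimes> b) \<otimes> c'"
    using carrier by (simp add: x'(3) m_ac)
  finally show "y \<in> X <#> B <#> C"
    using x' b unfolding set_mult_def by blast
qed

lemma petridis:
  assumes X: "finite X" "X \<subseteq> carrier G" and B: "finite B" "B \<subseteq> carrier G"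
    and minimal: "\<And>Y. Y \<subseteq> X \<Longrightarrow> Y \<noteq> {} \<Longrightarrow> card (X <#> B) * card Y \<le> card (Y <#> B) * card X"
    and C: "finite C" "C \<subseteq> carrier G"
  shows "card (X <#> B <#> C) * card X \<le> card (X <#> B) * card (X <#> C)"
  using C
proof (induction C rule: finite_induct)
  case empty
  then show ?case by (simp add: set_mult_def)
next
  case (insert c C)
  let ?XB = "X <#> B"
  define Y where "Y = {x \<in> X. {x} <#> B <#> {c} \<subseteq> ?XB <#> C}"
  define Z where "Z = {x \<in> X. x \<otimes> c \<in> X <#> C}"
  have c: "c \<in> carrier G" and CG: "C \<subseteq> carrier G"
    using insert.prems by auto
  have XB: "finite ?XB" "?XB \<subseteq> carrier G"
    using X B by (simp_all add: finite_set_mult set_mult_closed)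
  have Y: "Y \<subseteq> X" "finite Y"
    using X(1) by (auto simp: Y_def)
  have "Z \<subseteq> Y"
    using singleton_set_mult_subset[OF _ c B(2) X(2) CG] X(2) by (auto simp: Y_def Z_def)
  then have ZY: "card Z \<le> card Y"
    using Y(2) card_mono by blast
  have "Y <#> B <#> {c} \<subseteq> ?XB <#> C"
  proof
    fix s assume "s \<in> Y <#> B <#> {c}"
    then obtain y b where "y \<in> Y" "b \<in> B" "s = y \<otimes> b \<otimes> c"
      by (auto simp: set_mult_def)
    then have "s \<in> {y} <#> B <#> {c}" "{y} <#> B <#> {c} \<subseteq> ?XB <#> C"
      by (auto simp: Y_def set_mult_def)
    then show "s \<in> ?XB <#> C"
      by blast
  qed
  then have grow_XB: "card (?XB <#> insert c C) + card (Y <#> B) \<le> card (?XB <#> C) + card ?XB"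
    by (rule card_set_mult_insert_le[OF XB insert.hyps(1) c mono_set_mult[OF Y(1) order_refl]])
  have grow_X: "card (X <#> insert c C) + card Z = card (X <#> C) + card X"
    unfolding Z_def by (rule card_set_mult_insert[OF X insert.hyps(1) c])
  have IH: "card (?XB <#> C) * card X \<le> card ?XB * card (X <#> C)"
    using insert.IH CG by simp
  have minY: "card ?XB * card Y \<le> card (Y <#> B) * card X"
    using minimal[OF Y(1)] by (cases "Y = {}") auto
  have "card (?XB <#> insert c C) * card X + card (Y <#> B) * card X
      \<le> card (?XB <#> C) * card X + card ?XB * card X"
    using mult_right_mono[OF grow_XB, of "card X"] by (simp add: algebra_simps)
  also have "\<dots> \<le> card ?XB * (card (X <#> C) + card X)"
    using IH by (simp add: algebra_simps)
  also have "\<dots> = card ?XB * card (X <#> insert c C) + card ?XB * card Z"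
    by (simp only: grow_X[symmetric] add_mult_distrib2)
  also have "\<dots> \<le> card ?XB * card (X <#> insert c C) + card (Y <#> B) * card X"
    using mult_left_mono[OF ZY, of "card ?XB"] minY by linarith
  finally show ?case
    by simp
qed

lemma plunnecke_of_minimal:
  assumes X: "finite X" "X \<subseteq> carrier G" and B: "finite B" "B \<subseteq> carrier G"
    and minimal: "\<And>Y. Y \<subseteq> X \<Longrightarrow> Y \<noteq> {} \<Longrightarrow> card (X <#> B) * card Y \<le> card (Y <#> B) * card X"
  shows "card (X <#> set_mult_power G m B) * card X ^ m \<le> card (X <#> B) ^ m * card X"
proof (induction m)
  case 0
  then show ?case
    using X(2) by (simp add: r_coset_eq_set_mult[symmetric])
next
  case (Suc m)
  let ?P = "set_mult_power G m B"
  have P: "finite ?P" "?P \<subseteq> carrier G"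
    using B by (simp_all add: finite_set_mult_power set_mult_power_closed)
  have "X <#> set_mult_power G (Suc m) B = X <#> (B <#> ?P)"
    using P(2) B(2) by (simp add: set_mult_comm)
  also have "\<dots> = X <#> B <#> ?P"
    using X(2) B(2) P(2) by (simp add: set_mult_assoc)
  finally have "card (X <#> set_mult_power G (Suc m) B) * card X \<le> card (X <#> B) * card (X <#> ?P)"
    using petridis[OF X B minimal P] by simp
  then have "card (X <#> set_mult_power G (Suc m) B) * card X * card X ^ m
      \<le> card (X <#> B) * card (X <#> ?P) * card X ^ m"
    by (rule mult_le_mono1)
  also have "\<dots> \<le> card (X <#> B) * (card (X <#> B) ^ m * card X)"
    unfolding mult.assoc by (rule mult_le_mono2[OF Suc.IH])
  finally show ?case
    by (simp add: mult_ac)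
qed

lemma plunnecke_subset:
  assumes D: "finite D" "D \<noteq> {}" "D \<subseteq> carrier G" and B: "finite B" "B \<subseteq> carrier G"
  shows "\<exists>X\<subseteq>D. X \<noteq> {} \<and>
    (\<forall>m. real (card (X <#> set_mult_power G m B)) \<le> (card (D <#> B) / card D) ^ m * card X)"
proof -
  define ratio where "ratio Y = real (card (Y <#> B)) / card Y" for Y
  define F where "F = {Y. Y \<subseteq> D \<and> Y \<noteq> {}}"
  have "finite F" "D \<in> F"
    using D by (auto simp: F_def)
  then obtain X where "X \<in> F" and least: "\<And>Y. Y \<in> F \<Longrightarrow> ratio X \<le> ratio Y"
    using arg_min_least arg_min_if_finite(1) by (metis empty_iff)
  then have X: "X \<subseteq> D" "X \<noteq> {}" "finite X" "X \<subseteq> carrier G"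
    using D by (auto simp: F_def finite_subset)
  then have cardX: "card X > 0"
    by (simp add: card_gt_0_iff)
  have minimal: "card (X <#> B) * card Y \<le> card (Y <#> B) * card X" if "Y \<subseteq> X" "Y \<noteq> {}" for Y
  proof -
    have "card Y > 0"
      using that X(3) by (simp add: card_gt_0_iff finite_subset)
    moreover have "ratio X \<le> ratio Y"
      using that X by (intro least) (auto simp: F_def)
    ultimately have "real (card (X <#> B) * card Y) \<le> real (card (Y <#> B) * card X)"
      using cardX by (simp add: ratio_def field_simps)
    then show ?thesis
      by linarith
  qed
  have "real (card (X <#> set_mult_power G m B)) \<le> (card (D <#> B) / card D) ^ m * card X" for m
  proof -
    have "real (card (X <#> set_mult_power G m B) * card X ^ m) \<le> real (card (X <#> B) ^ m * card X)"
      by (simp only: of_nat_le_iff) (rule plunnecke_of_minimal[OF X(3,4) B minimal])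
    then have "real (card (X <#> set_mult_power G m B)) \<le> ratio X ^ m * card X"
      using cardX by (simp add: ratio_def power_divide field_simps)
    also have "\<dots> \<le> ratio D ^ m * card X"
      using least[OF \<open>D \<in> F\<close>] by (intro mult_right_mono power_mono) (auto simp: ratio_def)
    finally show ?thesis
      by (simp add: ratio_def)
  qed
  then show ?thesis
    using X by blast
qed

end

subsection \<open>The group \<open>T\<^sup>d \<times> Z\<close>\<close>

lemma mem_torus_PiE_iff: "x \<in> torus d \<Longrightarrow> x \<in> PiE {..<d} F \<longleftrightarrow> (\<forall>i<d. x i \<in> F i)"
  by (auto simp: torus_def PiE_iff)

lemma frac_frac_diff: "frac (frac x - y) = frac (x - y)"
  using frac_add_simps(1)[of x "- y"] by simp

lemma frac_diff_unit_interval: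
  assumes "x \<in> {0..<1}" "a \<in> {0..<1}"
  shows "frac (x - a) = (if a \<le> x then x - a else x - a + 1)"
proof (cases "a \<le> x")
  case True
  then show ?thesis
    using assms by simp
next
  case False
  then have "frac (x - a) = frac (x - a + 1)"
    by (simp add: frac_1_eq)
  also have "\<dots> = x - a + 1"
    using False assms by (intro frac_eq_id) auto
  finally show ?thesis
    using False by simp
qed

abbreviation tcarrier :: "nat \<Rightarrow> ((nat \<Rightarrow> real) \<times> 'z::ab_group_add) set" where
  "tcarrier d \<equiv> torus d \<times> UNIV"

lemma tproj_in_torus: "tproj d v \<in> torus d"
  by (simp add: torus_def tproj_def frac_lt_1)

lemma tproj_apply [simp]: "i < d \<Longrightarrow> tproj d v i = frac (v i)"
  by (simp add: tproj_def)

lemma torus_coord: "p \<in> torus d \<Longrightarrow> i < d \<Longrightarrow> 0 \<le> p i \<and> p i < 1"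
  unfolding torus_def PiE_iff by simp

lemma torus_eqI: "p \<in> torus d \<Longrightarrow> q \<in> torus d \<Longrightarrow> (\<And>i. i < d \<Longrightarrow> p i = q i) \<Longrightarrow> p = q"
  unfolding torus_def by (rule PiE_ext) auto

lemma tproj_cong: "(\<And>i. i < d \<Longrightarrow> frac (v i) = frac (w i)) \<Longrightarrow> tproj d v = tproj d w"
  by (auto simp: tproj_def)

lemma tproj_torus: "p \<in> torus d \<Longrightarrow> tproj d p = p"
  using torus_coord[of p d] by (intro torus_eqI) (auto simp: tproj_in_torus)

lemma fst_gadd: "i < d \<Longrightarrow> fst (gadd d p q) i = frac (fst p i + fst q i)"
  by (simp add: gadd_def)

lemma snd_gadd [simp]: "snd (gadd d p q) = snd p + snd q"
  by (simp add: gadd_def)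

lemma gadd_in_tcarrier: "gadd d p q \<in> tcarrier d"
  by (simp add: gadd_def tproj_in_torus)

lemma gzero_in_tcarrier: "gzero d \<in> tcarrier d"
  by (simp add: gzero_def tproj_in_torus)

lemma tcarrier_eqI:
  assumes "p \<in> tcarrier d" "q \<in> tcarrier d" "\<And>i. i < d \<Longrightarrow> fst p i = fst q i" "snd p = snd q"
  shows "p = q"
  using assms torus_eqI[of "fst p" d "fst q"] by (simp add: mem_Times_iff prod_eq_iff)

lemma gadd_commute: "gadd d p q = gadd d q p"
  by (simp add: gadd_def add.commute)

lemma gadd_assoc: "gadd d (gadd d p q) r = gadd d p (gadd d q r)"
  by (auto simp: gadd_def add.assoc intro: tproj_cong)

lemma gadd_gzero:
  assumes "p \<in> tcarrier d" shows "gadd d p (gzero d) = p"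
proof -
  have "fst (gadd d p (gzero d)) = tproj d (fst p)"
    by (auto simp: gadd_def gzero_def intro: tproj_cong)
  with assms show ?thesis
    by (simp add: prod_eq_iff tproj_torus mem_Times_iff gzero_def)
qed

definition torus_group :: "nat \<Rightarrow> ((nat \<Rightarrow> real) \<times> 'z::ab_group_add) monoid" where
  "torus_group d = \<lparr>carrier = tcarrier d, mult = gadd d, one = gzero d\<rparr>"

lemma comm_group_torus_group: "comm_group (torus_group d :: ((nat \<Rightarrow> real) \<times> 'z::ab_group_add) monoid)"
proof (rule comm_groupI, unfold torus_group_def partial_object.select_convs monoid.select_convs)
  fix p :: "(nat \<Rightarrow> real) \<times> 'z" assume p: "p \<in> tcarrier d"
  show "gadd d (gzero d) p = p"
    using gadd_gzero[OF p] by (simp add: gadd_commute)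
  have "gadd d (tproj d (\<lambda>i. - fst p i), - snd p) p = gzero d"
    by (auto simp: gadd_def gzero_def intro: tproj_cong)
  then show "\<exists>q\<in>tcarrier d. gadd d q p = gzero d"
    using tproj_in_torus by blast
qed (auto simp: gadd_in_tcarrier gzero_in_tcarrier gadd_assoc intro: gadd_commute)

lemma sumset_eq_set_mult: "sumset d X Y = X <#>\<^bsub>torus_group d\<^esub> Y"
  unfolding sumset_def set_mult_def torus_group_def by auto

lemma msumset_eq_set_mult_power: "msumset d m B = set_mult_power (torus_group d) m B"
  by (induction m) (simp_all add: sumset_eq_set_mult torus_group_def)

lemma plunnecke_subset_torus:
  assumes D: "finite D" "D \<noteq> {}" "D \<subseteq> tcarrier d" and B: "finite B" "B \<subseteq> tcarrier d"
  shows "\<exists>X\<subseteq>D. X \<noteq> {} \<and>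
    (\<forall>m. real (card (sumset d X (msumset d m B))) \<le> (card (sumset d D B) / card D) ^ m * card X)"
proof -
  have "D \<subseteq> carrier (torus_group d)" "B \<subseteq> carrier (torus_group d)"
    using D(3) B(2) by (simp_all add: torus_group_def)
  then show ?thesis
    unfolding sumset_eq_set_mult msumset_eq_set_mult_power
    by (rule comm_group.plunnecke_subset[OF comm_group_torus_group D(1,2) _ B(1)])
qed

lemma sumset_iff: "x \<in> sumset d X Y \<longleftrightarrow> (\<exists>a\<in>X. \<exists>b\<in>Y. x = gadd d a b)"
  unfolding sumset_def by blast

lemma sumsetI: "a \<in> X \<Longrightarrow> b \<in> Y \<Longrightarrow> gadd d a b \<in> sumset d X Y"
  unfolding sumset_iff by blast

lemma sumsetE:
  assumes "x \<in> sumset d X Y"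
  obtains a b where "a \<in> X" "b \<in> Y" "x = gadd d a b"
  using assms unfolding sumset_iff by blast

lemma sumset_subset_tcarrier: "sumset d X Y \<subseteq> tcarrier d"
  using gadd_in_tcarrier by (blast elim: sumsetE)

lemma finite_sumset: "finite X \<Longrightarrow> finite Y \<Longrightarrow> finite (sumset d X Y)"
  by (simp add: sumset_eq_set_mult finite_set_mult)

lemma sumset_commute: "sumset d X Y = sumset d Y X"
  unfolding set_eq_iff sumset_iff using gadd_commute by blast

lemma sumset_assoc: "sumset d (sumset d X Y) Z = sumset d X (sumset d Y Z)"
proof (intro equalityI subsetI)
  fix x assume "x \<in> sumset d (sumset d X Y) Z"
  then obtain a b c where "a \<in> X" "b \<in> Y" "c \<in> Z" "x = gadd d (gadd d a b) c"
    by (blast elim: sumsetE)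
  then show "x \<in> sumset d X (sumset d Y Z)"
    by (simp add: gadd_assoc sumsetI)
next
  fix x assume "x \<in> sumset d X (sumset d Y Z)"
  then obtain a b c where "a \<in> X" "b \<in> Y" "c \<in> Z" "x = gadd d a (gadd d b c)"
    by (blast elim: sumsetE)
  then show "x \<in> sumset d (sumset d X Y) Z"
    by (simp add: gadd_assoc[symmetric] sumsetI)
qed

lemma sumset_left_commute: "sumset d X (sumset d Y Z) = sumset d Y (sumset d X Z)"
  by (metis sumset_assoc sumset_commute)

lemmas sumset_ac = sumset_assoc sumset_commute sumset_left_commute

lemma sumset_mono: "X \<subseteq> X' \<Longrightarrow> Y \<subseteq> Y' \<Longrightarrow> sumset d X Y \<subseteq> sumset d X' Y'"
  unfolding subset_iff sumset_iff by blast

lemma sumset_gzero: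
  assumes "X \<subseteq> tcarrier d" shows "sumset d X {gzero d} = X"
proof -
  have "sumset d X {gzero d} = (\<lambda>x. gadd d x (gzero d)) ` X"
    unfolding set_eq_iff sumset_iff image_iff by blast
  also have "\<dots> = (\<lambda>x. x) ` X"
    by (rule image_cong) (use assms gadd_gzero in auto)
  finally show ?thesis
    by simp
qed

lemma sumset_UN_singleton: "sumset d S Y = (\<Union>p\<in>S. sumset d {p} Y)"
  unfolding set_eq_iff UN_iff sumset_iff by blast

lemma finite_msumset: "finite B \<Longrightarrow> finite (msumset d m B)"
  by (induction m) (simp_all add: finite_sumset)

subsection \<open>Cubes and grids\<close>

definition tcube :: "nat \<Rightarrow> real \<Rightarrow> ((nat \<Rightarrow> real) \<times> 'z::ab_group_add) set" where
  "tcube d r = {(tproj d v, 0) | v. \<forall>i<d. \<bar>v i\<bar> \<le> r}"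

lemma cube_eq_tcube: "cube d n = tcube d (1 / real n)"
  by (simp add: cube_def tcube_def)

lemma tcube_mono: "r \<le> s \<Longrightarrow> tcube d r \<subseteq> tcube d s"
  unfolding tcube_def by force

lemma sumset_tcube: "sumset d (tcube d r) (tcube d s) \<subseteq> tcube d (r + s)"
proof
  fix x assume "x \<in> sumset d (tcube d r) (tcube d s)"
  then obtain u v where u: "\<forall>i<d. \<bar>u i\<bar> \<le> r" and v: "\<forall>i<d. \<bar>v i\<bar> \<le> s"
    and x: "x = gadd d (tproj d u, 0) (tproj d v, 0)"
    unfolding tcube_def by (blast elim: sumsetE)
  have "x = (tproj d (\<lambda>i. u i + v i), 0)"
    unfolding x gadd_def by (auto intro: tproj_cong)
  moreover have "\<forall>i<d. \<bar>u i + v i\<bar> \<le> r + s"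
    using u v by (auto intro: order_trans[OF abs_triangle_ineq] add_mono)
  ultimately show "x \<in> tcube d (r + s)"
    unfolding tcube_def by blast
qed

lemma sumset_sumset_tcube:
  "sumset d (sumset d S (tcube d r)) (tcube d s) \<subseteq> sumset d S (tcube d (r + s))"
  unfolding sumset_assoc by (intro sumset_mono order_refl sumset_tcube)

definition grid_coords :: "nat \<Rightarrow> real set" where
  "grid_coords n = {x \<in> {0..<1}. \<exists>k::int. x = of_int k / real n}"

definition grid :: "nat \<Rightarrow> nat \<Rightarrow> ((nat \<Rightarrow> real) \<times> 'z::ab_group_add) set" where
  "grid d n = PiE {..<d} (\<lambda>_. grid_coords n) \<times> UNIV"

definition grid_floor :: "nat \<Rightarrow> nat \<Rightarrow> (nat \<Rightarrow> real) \<times> 'z \<Rightarrow> (nat \<Rightarrow> real) \<times> 'z" where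
  "grid_floor d n x = ((\<lambda>i\<in>{..<d}. of_int \<lfloor>real n * fst x i\<rfloor> / real n), snd x)"

definition grid_cell :: "nat \<Rightarrow> nat \<Rightarrow> ((nat \<Rightarrow> real) \<times> 'z::ab_group_add) set" where
  "grid_cell d n = {(tproj d v, 0) | v. \<forall>i<d. v i \<in> {0..1 / real n}}"

definition grid_corners :: "nat \<Rightarrow> nat \<Rightarrow> ((nat \<Rightarrow> real) \<times> 'z::ab_group_add) set" where
  "grid_corners d n = {(tproj d e, 0) | e. \<forall>i<d. e i \<in> {0, 1 / real n}}"

definition grid_box :: "nat \<Rightarrow> nat \<Rightarrow> (nat \<Rightarrow> real) \<times> 'z \<Rightarrow> ((nat \<Rightarrow> real) \<times> 'z) set" where
  "grid_box d n p = PiE {..<d} (\<lambda>i. {fst p i ..< fst p i + 1 / real n}) \<times> {snd p}"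

lemma frac_in_grid_coords:
  assumes "n > 0" shows "frac (of_int k / real n) \<in> grid_coords n"
proof -
  have "\<exists>j::int. frac (of_int k / real n) = of_int j / real n"
    using assms by (intro exI[of _ "k - \<lfloor>of_int k / real n\<rfloor> * int n"]) (simp add: frac_def field_simps)
  then show ?thesis
    by (simp add: grid_coords_def frac_lt_1)
qed

lemma grid_coordsE:
  assumes "x \<in> grid_coords n" "n > 0"
  obtains k :: int where "x = of_int k / real n" "0 \<le> k" "k < int n"
proof -
  obtain k :: int where k: "x = of_int k / real n" and x: "0 \<le> x" "x < 1"
    using assms(1) by (auto simp: grid_coords_def)
  then have kx: "real_of_int k = x * real n"
    using assms(2) by simp
  have "0 \<le> x * real n" "x * real n < real n"
    using x assms(2) by simp_all
  then have "0 \<le> k" "k < int n"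
    unfolding kx[symmetric] by linarith+
  then show ?thesis
    using k that by blast
qed

lemma finite_grid_coords: "n > 0 \<Longrightarrow> finite (grid_coords n)"
  by (rule finite_subset[of _ "(\<lambda>k. of_int k / real n) ` {0..<int n}"])
    (auto elim!: grid_coordsE)

lemma finite_grid: "n > 0 \<Longrightarrow> finite (grid d n :: ((nat \<Rightarrow> real) \<times> 'z::{ab_group_add,finite}) set)"
  unfolding grid_def by (intro finite_cartesian_product finite_PiE finite_grid_coords) auto

lemma grid_subset_tcarrier: "grid d n \<subseteq> tcarrier d"
  unfolding grid_def torus_def grid_coords_def by (rule Sigma_mono[OF PiE_mono]) auto

lemma grid_iff: "p \<in> grid d n \<longleftrightarrow> p \<in> tcarrier d \<and> (\<forall>i<d. fst p i \<in> grid_coords n)"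
  by (auto simp: grid_def torus_def grid_coords_def mem_Times_iff PiE_iff)

lemma grid_coord_bounds:
  assumes "n > 0" "p \<in> grid d n" "i < d"
  shows "0 \<le> fst p i" "fst p i + 1 / real n \<le> 1"
proof -
  obtain k where k: "fst p i = of_int k / real n" "0 \<le> k" "k < int n"
    using assms grid_coordsE by (metis grid_iff)
  then have "real_of_int k + 1 \<le> real n"
    by linarith
  then show "fst p i + 1 / real n \<le> 1"
    using assms(1) k by (simp add: field_simps)
  show "0 \<le> fst p i"
    using k by simp
qed

lemma tproj_in_grid:
  assumes "n > 0" "\<And>i. i < d \<Longrightarrow> \<exists>k::int. v i = of_int k / real n"
  shows "(tproj d v, z) \<in> grid d n"
  using assms frac_in_grid_coords by (fastforce simp: grid_iff tproj_in_torus)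

lemma gadd_in_grid:
  assumes n: "n > 0" and "p \<in> grid d n" "q \<in> grid d n"
  shows "gadd d p q \<in> grid d n"
  unfolding gadd_def
proof (rule tproj_in_grid[OF n])
  fix i assume "i < d"
  then obtain k l :: int where "fst p i = of_int k / real n" "fst q i = of_int l / real n"
    using assms grid_coordsE by (metis grid_iff)
  then show "\<exists>m::int. fst p i + fst q i = of_int m / real n"
    by (intro exI[of _ "k + l"]) (simp add: add_divide_distrib)
qed

lemma sumset_subset_grid:
  assumes "n > 0" "X \<subseteq> grid d n" "Y \<subseteq> grid d n"
  shows "sumset d X Y \<subseteq> grid d n"
  using assms gadd_in_grid by (blast elim: sumsetE)

lemma grid_corners_subset_grid: "n > 0 \<Longrightarrow> grid_corners d n \<subseteq> grid d n"
  unfolding grid_corners_def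
  by (force intro!: tproj_in_grid intro: exI[of _ 0] exI[of _ 1])

lemma grid_floor_coord: "i < d \<Longrightarrow> fst (grid_floor d n x) i = of_int \<lfloor>real n * fst x i\<rfloor> / real n"
  by (simp add: grid_floor_def)

lemma snd_grid_floor [simp]: "snd (grid_floor d n x) = snd x"
  by (simp add: grid_floor_def)

lemma grid_floor_bounds:
  assumes "n > 0" "i < d"
  shows "fst (grid_floor d n x) i \<le> fst x i" "fst x i < fst (grid_floor d n x) i + 1 / real n"
proof -
  have "of_int \<lfloor>real n * fst x i\<rfloor> \<le> real n * fst x i"
    "real n * fst x i < of_int \<lfloor>real n * fst x i\<rfloor> + 1"
    by linarith+
  then show "fst (grid_floor d n x) i \<le> fst x i" "fst x i < fst (grid_floor d n x) i + 1 / real n"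
    using assms by (simp_all add: grid_floor_coord field_simps)
qed

lemma grid_floor_in_grid:
  assumes n: "n > 0" and x: "x \<in> tcarrier d"
  shows "grid_floor d n x \<in> grid d n"
proof -
  have "of_int \<lfloor>real n * fst x i\<rfloor> / real n \<in> grid_coords n" if "i < d" for i
  proof -
    have "0 \<le> fst x i" "fst x i < 1"
      using x that torus_coord by (auto simp: mem_Times_iff)
    then have "0 \<le> \<lfloor>real n * fst x i\<rfloor>" "\<lfloor>real n * fst x i\<rfloor> < int n"
      using n by (simp_all add: floor_less_iff)
    then show ?thesis
      using n by (auto simp: grid_coords_def field_simps)
  qed
  then show ?thesis
    by (simp add: grid_def grid_floor_def)
qed

lemma grid_floor_image_subset_grid: "n > 0 \<Longrightarrow> S \<subseteq> tcarrier d \<Longrightarrow> grid_floor d n ` S \<subseteq> grid d n"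
  using grid_floor_in_grid by blast

lemma finite_grid_floor_image:
  "n > 0 \<Longrightarrow> S \<subseteq> tcarrier d \<Longrightarrow> finite (grid_floor d n ` (S :: ((nat \<Rightarrow> real) \<times> 'z::{ab_group_add,finite}) set))"
  by (rule finite_subset[OF grid_floor_image_subset_grid finite_grid])

lemma mem_grid_box_grid_floor:
  assumes "n > 0" "x \<in> tcarrier d"
  shows "x \<in> grid_box d n (grid_floor d n x)"
proof -
  have "fst x \<in> PiE {..<d} (\<lambda>i. {fst (grid_floor d n x) i ..< fst (grid_floor d n x) i + 1 / real n})"
    using assms grid_floor_bounds[OF assms(1), of _ d x] by (simp add: mem_Times_iff mem_torus_PiE_iff)
  then show ?thesis
    by (simp add: grid_box_def mem_Times_iff)
qed

lemma grid_floor_in_sumset_tcube: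
  assumes n: "n > 0" and x: "x \<in> tcarrier d"
  shows "grid_floor d n x \<in> sumset d {x} (tcube d (1 / real n))"
proof -
  define v where "v i = fst (grid_floor d n x) i - fst x i" for i
  have "\<bar>v i\<bar> \<le> 1 / real n" if "i < d" for i
    using grid_floor_bounds[OF n that, of x] by (simp add: v_def abs_le_iff)
  then have "(tproj d v, 0) \<in> tcube d (1 / real n)"
    unfolding tcube_def by blast
  moreover have g: "grid_floor d n x \<in> tcarrier d"
    using grid_floor_in_grid[OF assms] grid_subset_tcarrier by blast
  have "gadd d x (tproj d v, 0) = grid_floor d n x"
  proof (rule tcarrier_eqI[OF gadd_in_tcarrier g])
    fix i assume "i < d"
    then show "fst (gadd d x (tproj d v, 0)) i = fst (grid_floor d n x) i"
      using g torus_coord by (simp add: fst_gadd v_def mem_Times_iff)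
  qed simp
  ultimately show ?thesis
    by (metis singletonI sumsetI)
qed

lemma grid_floor_image_subset:
  "n > 0 \<Longrightarrow> S \<subseteq> tcarrier d \<Longrightarrow> grid_floor d n ` S \<subseteq> sumset d S (tcube d (1 / real n))"
  using grid_floor_in_sumset_tcube sumset_mono[of "{_}" S] by blast

lemma gzero_in_grid_cell: "gzero d \<in> grid_cell d n"
  unfolding grid_cell_def gzero_def by force

lemma grid_cell_subset_tcube: "grid_cell d n \<subseteq> tcube d (1 / real n)"
  unfolding grid_cell_def tcube_def by force

lemma grid_corners_subset_tcube: "n > 0 \<Longrightarrow> grid_corners d n \<subseteq> tcube d (1 / real n)"
  unfolding grid_corners_def tcube_def by force

lemma sumset_grid_floor_cell_subset:
  assumes "n > 0" "S \<subseteq> tcarrier d"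
  shows "sumset d (grid_floor d n ` S) (grid_cell d n) \<subseteq> sumset d S (tcube d (2 / real n))"
proof -
  have "sumset d (grid_floor d n ` S) (grid_cell d n)
      \<subseteq> sumset d (sumset d S (tcube d (1 / real n))) (tcube d (1 / real n))"
    by (intro sumset_mono grid_floor_image_subset assms grid_cell_subset_tcube)
  also have "\<dots> \<subseteq> sumset d S (tcube d (1 / real n + 1 / real n))"
    by (rule sumset_sumset_tcube)
  finally show ?thesis
    by simp
qed

lemma grid_cell_add_grid_cell:
  "sumset d (grid_cell d n) (grid_cell d n) \<subseteq> sumset d (grid_corners d n) (grid_cell d n)"
proof
  fix x assume "x \<in> sumset d (grid_cell d n) (grid_cell d n)"
  then obtain u v where u: "\<forall>i<d. u i \<in> {0..1 / real n}" and v: "\<forall>i<d. v i \<in> {0..1 / real n}"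
    and x: "x = gadd d (tproj d u, 0) (tproj d v, 0)"
    unfolding grid_cell_def by (blast elim: sumsetE)
  \<comment> \<open>carry the excess of each coordinate sum over \<open>1/n\<close> into a corner\<close>
  define e where "e i = (if u i + v i \<le> 1 / real n then 0 else 1 / real n)" for i
  have "(tproj d e, 0) \<in> grid_corners d n"
    unfolding grid_corners_def mem_Collect_eq by (intro exI[of _ e] conjI) (auto simp: e_def)
  moreover have "(tproj d (\<lambda>i. u i + v i - e i), 0) \<in> grid_cell d n"
    using u v unfolding grid_cell_def e_def by force
  moreover have "x = gadd d (tproj d e, 0) (tproj d (\<lambda>i. u i + v i - e i), 0)"
    unfolding x gadd_def by (auto intro: tproj_cong)
  ultimately show "x \<in> sumset d (grid_corners d n) (grid_cell d n)"
    by (metis sumsetI)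
qed

definition arc :: "real \<Rightarrow> real \<Rightarrow> real set" where
  "arc a w = {x \<in> {0..<1}. frac (x - a) \<le> w}"

lemma closed_frac_le: "closed {u::real. frac u \<le> w}"
proof -
  have "- {u::real. frac u \<le> w} = (\<Union>k::int. {of_int k + w <..< of_int k + 1})"
  proof (intro equalityI subsetI)
    fix u :: real assume "u \<in> - {u. frac u \<le> w}"
    then show "u \<in> (\<Union>k::int. {of_int k + w <..< of_int k + 1})"
      by (intro UN_I[of "\<lfloor>u\<rfloor>"]) (auto simp: frac_def)
  next
    fix u :: real assume "u \<in> (\<Union>k::int. {of_int k + w <..< of_int k + 1})"
    then obtain k :: int where k: "of_int k + w < u" "u < of_int k + 1"
      by auto
    show "u \<in> - {u. frac u \<le> w}"
    proof (cases "w < 0")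
      case True
      then have "w < frac u"
        using frac_ge_0[of u] by linarith
      then show ?thesis
        by simp
    next
      case False
      then have "\<lfloor>u\<rfloor> = k"
        using k by (simp add: floor_eq_iff)
      then show ?thesis
        using k by (simp add: frac_def)
    qed
  qed
  then show ?thesis
    unfolding closed_def by (simp add: open_UN)
qed

lemma arc_borel: "arc a w \<in> sets borel"
proof -
  have "closed ((\<lambda>x. x - a) -` {u::real. frac u \<le> w})"
    by (intro continuous_closed_vimage closed_frac_le continuous_intros)
  moreover have "arc a w = {0..<1} \<inter> (\<lambda>x. x - a) -` {u. frac u \<le> w}"
    by (auto simp: arc_def)
  ultimately show ?thesis
    by (simp add: borel_closed sets.Int)
qed

lemma measure_arc_le:
  assumes a: "a \<in> {0..<1}" and w: "0 \<le> w" "w \<le> 1"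
  shows "measure lborel (arc a w) \<le> w"
proof -
  have arc: "arc a w = {x \<in> {0..<1}. if a \<le> x then x \<le> a + w else x \<le> a + w - 1}"
    using a by (auto simp: arc_def frac_diff_unit_interval)
  have "emeasure lborel (arc a w) \<le> ennreal w"
  proof (cases "a + w < 1")
    case True
    then have "arc a w \<subseteq> {a..a + w}"
      unfolding arc by auto
    then have "emeasure lborel (arc a w) \<le> emeasure lborel {a..a + w}"
      by (rule emeasure_mono) simp
    then show ?thesis
      using w by simp
  next
    case False
    then have "arc a w \<subseteq> {a..1} \<union> {0..a + w - 1}"
      unfolding arc by auto
    then have "emeasure lborel (arc a w) \<le> emeasure lborel ({a..1} \<union> {0..a + w - 1})"
      by (rule emeasure_mono) simp
    also have "\<dots> \<le> emeasure lborel {a..1} + emeasure lborel {0..a + w - 1}"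
      by (rule emeasure_subadditive) simp_all
    also have "\<dots> = ennreal w"
      using a False by (simp add: ennreal_plus[symmetric] del: ennreal_plus)
    finally show ?thesis .
  qed
  then show ?thesis
    using w(1) by (simp add: measure_def enn2real_leI)
qed

lemma sumset_singleton_grid_cell:
  assumes n: "n > 0" and p: "p \<in> tcarrier d"
  shows "sumset d {p} (grid_cell d n) = PiE {..<d} (\<lambda>i. arc (fst p i) (1 / real n)) \<times> {snd p}"
proof (intro equalityI subsetI)
  fix q assume "q \<in> sumset d {p} (grid_cell d n)"
  then obtain v where v: "\<forall>i<d. v i \<in> {0..1 / real n}" and q: "q = gadd d p (tproj d v, 0)"
    unfolding grid_cell_def by (blast elim: sumsetE)
  have "frac (v i) \<le> 1 / real n" if "i < d" for i
  proof -
    have "frac (v i) \<le> v i"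
      using v that by (simp add: frac_def)
    then show ?thesis
      using v that by auto
  qed
  then show "q \<in> PiE {..<d} (\<lambda>i. arc (fst p i) (1 / real n)) \<times> {snd p}"
    using gadd_in_tcarrier[of d p "(tproj d v, 0)"]
    by (auto simp: q arc_def mem_Times_iff mem_torus_PiE_iff fst_gadd frac_frac_diff frac_lt_1)
next
  fix q assume q: "q \<in> PiE {..<d} (\<lambda>i. arc (fst p i) (1 / real n)) \<times> {snd p}"
  define v where "v i = frac (fst q i - fst p i)" for i
  have "fst q i \<in> arc (fst p i) (1 / real n)" if "i < d" for i
    using q that by (simp add: mem_Times_iff PiE_iff)
  then have q_coord: "fst q i \<in> {0..<1}" "0 \<le> v i" "v i \<le> 1 / real n" if "i < d" for i
    using that by (simp_all add: arc_def v_def)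
  have qT: "q \<in> tcarrier d"
    using q by (auto simp: torus_def arc_def mem_Times_iff PiE_iff)
  have "(tproj d v, 0) \<in> grid_cell d n"
    unfolding grid_cell_def mem_Collect_eq
    by (intro exI[of _ v] conjI) (auto simp: q_coord)
  moreover have "gadd d p (tproj d v, 0) = q"
  proof (rule tcarrier_eqI[OF gadd_in_tcarrier qT])
    fix i assume "i < d"
    then show "fst (gadd d p (tproj d v, 0)) i = fst q i"
      using q_coord by (simp add: fst_gadd v_def)
  next
    show "snd (gadd d p (tproj d v, 0)) = snd q"
      using q by (simp add: mem_Times_iff)
  qed
  ultimately show "q \<in> sumset d {p} (grid_cell d n)"
    by (metis singletonI sumsetI)
qed

lemma grid_box_subset_sumset_grid_cell:
  assumes n: "n > 0" and p: "p \<in> grid d n"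
  shows "grid_box d n p \<subseteq> sumset d {p} (grid_cell d n)"
proof -
  have "1 / real n \<le> 1"
    using n by simp
  then have "{fst p i ..< fst p i + 1 / real n} \<subseteq> arc (fst p i) (1 / real n)" if "i < d" for i
    using grid_coord_bounds[OF n p that] by (auto simp: arc_def)
  then show ?thesis
    unfolding sumset_singleton_grid_cell[OF n subsetD[OF grid_subset_tcarrier p]] grid_box_def
    by (intro Sigma_mono PiE_mono) auto
qed

lemma subset_sumset_grid_floor_cell:
  assumes "n > 0" "S \<subseteq> tcarrier d"
  shows "S \<subseteq> sumset d (grid_floor d n ` S) (grid_cell d n)"
proof
  fix x assume "x \<in> S"
  then have "x \<in> grid_box d n (grid_floor d n x)" "grid_floor d n x \<in> grid d n"
    using assms by (auto intro: mem_grid_box_grid_floor grid_floor_in_grid)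
  then have "x \<in> sumset d {grid_floor d n x} (grid_cell d n)"
    using grid_box_subset_sumset_grid_cell[OF assms(1)] by blast
  then show "x \<in> sumset d (grid_floor d n ` S) (grid_cell d n)"
    using \<open>x \<in> S\<close> sumset_mono[of "{grid_floor d n x}" "grid_floor d n ` S"] by blast
qed

lemma sumset_grid_cell_add:
  assumes "n > 0" "B \<subseteq> tcarrier d"
  shows "sumset d (sumset d S (grid_cell d n)) B
    \<subseteq> sumset d (sumset d S (sumset d (grid_floor d n ` B) (grid_corners d n))) (grid_cell d n)"
proof -
  let ?C = "grid_cell d n" and ?G = "grid_floor d n ` B" and ?E = "grid_corners d n"
  have "sumset d (sumset d S ?C) B \<subseteq> sumset d (sumset d S ?C) (sumset d ?G ?C)"
    by (intro sumset_mono order_refl subset_sumset_grid_floor_cell assms)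
  also have "\<dots> = sumset d (sumset d S ?G) (sumset d ?C ?C)"
    by (simp only: sumset_ac)
  also have "\<dots> \<subseteq> sumset d (sumset d S ?G) (sumset d ?E ?C)"
    by (intro sumset_mono order_refl grid_cell_add_grid_cell)
  also have "\<dots> = sumset d (sumset d S (sumset d ?G ?E)) ?C"
    by (simp only: sumset_ac)
  finally show ?thesis .
qed

lemma sumset_grid_cell_msumset:
  assumes n: "n > 0" and B: "B \<subseteq> tcarrier d" and X: "X \<subseteq> tcarrier d"
  shows "sumset d (sumset d X (grid_cell d n)) (msumset d m B)
    \<subseteq> sumset d (sumset d X (msumset d m (sumset d (grid_floor d n ` B) (grid_corners d n)))) (grid_cell d n)"
proof (induction m)
  case 0
  show ?case
    using X by (simp add: sumset_gzero sumset_subset_tcarrier)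
next
  case (Suc m)
  let ?Bd = "sumset d (grid_floor d n ` B) (grid_corners d n)"
  have "sumset d (sumset d X (grid_cell d n)) (msumset d (Suc m) B)
      = sumset d (sumset d (sumset d X (grid_cell d n)) (msumset d m B)) B"
    by (simp add: sumset_assoc)
  also have "\<dots> \<subseteq> sumset d (sumset d (sumset d X (msumset d m ?Bd)) (grid_cell d n)) B"
    by (intro sumset_mono Suc.IH order_refl)
  also have "\<dots> \<subseteq> sumset d (sumset d (sumset d X (msumset d m ?Bd)) ?Bd) (grid_cell d n)"
    by (rule sumset_grid_cell_add[OF n B])
  also have "\<dots> = sumset d (sumset d X (msumset d (Suc m) ?Bd)) (grid_cell d n)"
    by (simp add: sumset_assoc)
  finally show ?case .
qed

subsection \<open>Measures of cells and boxes\<close>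

lemma prob_space_haar: "prob_space (haar d :: ((nat \<Rightarrow> real) \<times> 'z::{ab_group_add,finite}) measure)"
  unfolding haar_def
  by (intro prob_space_pair prob_space_PiM prob_space_restrict_space prob_space_uniform_count_measure) auto

lemma emeasure_unit_interval:
  assumes "F \<subseteq> {0..<1::real}"
  shows "emeasure (restrict_space lborel {0..<1::real}) F = ennreal (measure lborel F)"
proof -
  have "emeasure lborel F \<le> emeasure lborel {0..1::real}"
    using assms by (intro emeasure_mono) auto
  then have finite: "emeasure lborel F \<noteq> \<top>"
    by (auto simp: top_unique)
  have "emeasure (restrict_space lborel {0..<1::real}) F = emeasure lborel F"
    using assms by (intro emeasure_restrict_space) auto
  also have "\<dots> = ennreal (measure lborel F)"
    using finite by (rule emeasure_eq_ennreal_measure)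
  finally show ?thesis .
qed

lemma haar_box:
  assumes F: "\<And>i. i < d \<Longrightarrow> F i \<in> sets borel" "\<And>i. i < d \<Longrightarrow> F i \<subseteq> {0..<1}"
  shows "PiE {..<d} F \<times> {z} \<in> sets (haar d :: ((nat \<Rightarrow> real) \<times> 'z::{ab_group_add,finite}) measure)"
    and "measure (haar d :: ((nat \<Rightarrow> real) \<times> 'z) measure) (PiE {..<d} F \<times> {z})
      = (\<Prod>i<d. measure lborel (F i)) / CARD('z)"
proof -
  let ?I = "restrict_space lborel {0..<1::real}" and ?U = "uniform_count_measure (UNIV :: 'z set)"
  interpret U: prob_space ?U
    by (rule prob_space_uniform_count_measure) auto
  have "prob_space ?I"
    by (rule prob_space_restrict_space) simp_all
  then interpret I: product_sigma_finite "\<lambda>_::nat. ?I"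
    unfolding product_sigma_finite_def using prob_space_imp_sigma_finite by blast
  have F_sets: "F i \<in> sets ?I" if "i < d" for i
    using F that by (subst sets_restrict_space_iff) auto
  show "PiE {..<d} F \<times> {z} \<in> sets (haar d :: ((nat \<Rightarrow> real) \<times> 'z) measure)"
    unfolding haar_def
    by (intro pair_measureI sets_PiM_I_finite F_sets) (auto simp: sets_uniform_count_measure)
  define P where "P = (\<Prod>i<d. measure lborel (F i))"
  have P: "0 \<le> P" "(\<Prod>i<d. ennreal (measure lborel (F i))) = ennreal P"
    unfolding P_def by (auto intro: prod_nonneg prod_ennreal)
  have "emeasure (PiM {..<d} (\<lambda>_. ?I)) (PiE {..<d} F) = (\<Prod>i<d. emeasure ?I (F i))"
    by (rule I.emeasure_PiM) (simp_all add: F_sets)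
  then have PiM: "emeasure (PiM {..<d} (\<lambda>_. ?I)) (PiE {..<d} F) = ennreal P"
    using emeasure_unit_interval[OF F(2)] P(2) by simp
  have "emeasure (haar d) (PiE {..<d} F \<times> {z}) = emeasure (PiM {..<d} (\<lambda>_. ?I)) (PiE {..<d} F) * emeasure ?U {z}"
    unfolding haar_def
    by (rule U.emeasure_pair_measure_Times) (auto intro!: sets_PiM_I_finite F_sets simp: sets_uniform_count_measure)
  also have "\<dots> = ennreal P * ennreal (1 / CARD('z))"
    by (simp add: PiM emeasure_uniform_count_measure)
  also have "\<dots> = ennreal (P / CARD('z))"
    using P(1) by (simp add: ennreal_mult[symmetric])
  finally show "measure (haar d :: ((nat \<Rightarrow> real) \<times> 'z) measure) (PiE {..<d} F \<times> {z})
      = (\<Prod>i<d. measure lborel (F i)) / CARD('z)"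
    using P(1) unfolding P_def by (intro measure_eq_emeasure_eq_ennreal) simp_all
qed

lemma sumset_singleton_grid_cell_measure:
  assumes n: "n > 0" and p: "p \<in> tcarrier d"
  shows "sumset d {p} (grid_cell d n) \<in> sets (haar d :: ((nat \<Rightarrow> real) \<times> 'z::{ab_group_add,finite}) measure)"
    and "measure (haar d) (sumset d {p} (grid_cell d n :: ((nat \<Rightarrow> real) \<times> 'z) set))
      \<le> (1 / real n) ^ d / CARD('z)"
proof -
  have p_coord: "fst p i \<in> {0..<1}" if "i < d" for i
    using p that torus_coord by (simp add: mem_Times_iff)
  have arcs: "arc (fst p i) (1 / real n) \<in> sets borel" "arc (fst p i) (1 / real n) \<subseteq> {0..<1}" for i
    by (rule arc_borel) (auto simp: arc_def)
  show "sumset d {p} (grid_cell d n) \<in> sets (haar d :: ((nat \<Rightarrow> real) \<times> 'z) measure)"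
    unfolding sumset_singleton_grid_cell[OF n p] by (rule haar_box(1)[OF arcs])
  have "measure (haar d) (sumset d {p} (grid_cell d n :: ((nat \<Rightarrow> real) \<times> 'z) set))
      = (\<Prod>i<d. measure lborel (arc (fst p i) (1 / real n))) / CARD('z)"
    unfolding sumset_singleton_grid_cell[OF n p] by (rule haar_box(2)[OF arcs])
  also have "\<dots> \<le> (\<Prod>i<d. 1 / real n) / CARD('z)"
    using n p_coord by (intro divide_right_mono prod_mono) (simp_all add: measure_arc_le)
  finally show "measure (haar d) (sumset d {p} (grid_cell d n :: ((nat \<Rightarrow> real) \<times> 'z) set))
      \<le> (1 / real n) ^ d / CARD('z)"
    by simp
qed

lemma measure_sumset_grid_cell_le:
  assumes n: "n > 0" and S: "finite S" "S \<subseteq> tcarrier d"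
  shows "sumset d S (grid_cell d n) \<in> sets (haar d :: ((nat \<Rightarrow> real) \<times> 'z::{ab_group_add,finite}) measure)"
    and "measure (haar d) (sumset d S (grid_cell d n :: ((nat \<Rightarrow> real) \<times> 'z) set))
      \<le> card S * ((1 / real n) ^ d / CARD('z))"
proof -
  have cells: "sumset d {p} (grid_cell d n) \<in> sets (haar d :: ((nat \<Rightarrow> real) \<times> 'z) measure)" if "p \<in> S" for p
    using sumset_singleton_grid_cell_measure(1)[OF n] S(2) that by blast
  show "sumset d S (grid_cell d n) \<in> sets (haar d :: ((nat \<Rightarrow> real) \<times> 'z) measure)"
    unfolding sumset_UN_singleton[of d S] using S(1) cells by blast
  have "measure (haar d) (sumset d S (grid_cell d n :: ((nat \<Rightarrow> real) \<times> 'z) set))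
      \<le> (\<Sum>p\<in>S. measure (haar d) (sumset d {p} (grid_cell d n :: ((nat \<Rightarrow> real) \<times> 'z) set)))"
    unfolding sumset_UN_singleton[of d S] by (rule measure_UNION_le[OF S(1) cells])
  also have "\<dots> \<le> (\<Sum>p\<in>S. (1 / real n) ^ d / CARD('z))"
    using sumset_singleton_grid_cell_measure(2)[OF n] S(2) by (intro sum_mono) blast
  finally show "measure (haar d) (sumset d S (grid_cell d n :: ((nat \<Rightarrow> real) \<times> 'z) set))
      \<le> card S * ((1 / real n) ^ d / CARD('z))"
    by simp
qed

lemma grid_box_measure:
  assumes n: "n > 0" and p: "p \<in> grid d n"
  shows "grid_box d n p \<in> sets (haar d :: ((nat \<Rightarrow> real) \<times> 'z::{ab_group_add,finite}) measure)"
    and "measure (haar d) (grid_box d n p :: ((nat \<Rightarrow> real) \<times> 'z) set) = (1 / real n) ^ d / CARD('z)"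
proof -
  have intervals: "{fst p i ..< fst p i + 1 / real n} \<in> sets borel"
    "{fst p i ..< fst p i + 1 / real n} \<subseteq> {0..<1}" if "i < d" for i
    using grid_coord_bounds[OF n p that] by auto
  show "grid_box d n p \<in> sets (haar d :: ((nat \<Rightarrow> real) \<times> 'z) measure)"
    unfolding grid_box_def by (rule haar_box(1)[OF intervals])
  have unit: "measure lborel {a ..< a + 1 / real n} = 1 / real n" for a
    by (rule measure_eq_emeasure_eq_ennreal) (use n in auto)
  have "measure (haar d) (grid_box d n p :: ((nat \<Rightarrow> real) \<times> 'z) set)
      = (\<Prod>i<d. measure lborel {fst p i ..< fst p i + 1 / real n}) / CARD('z)"
    unfolding grid_box_def by (rule haar_box(2)[OF intervals])
  also have "\<dots> = (\<Prod>i<d. 1 / real n) / CARD('z)"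
    by (simp only: unit)
  finally show "measure (haar d) (grid_box d n p :: ((nat \<Rightarrow> real) \<times> 'z) set) = (1 / real n) ^ d / CARD('z)"
    by simp
qed

lemma grid_box_disjoint:
  assumes n: "n > 0" and p: "p \<in> grid d n" and q: "q \<in> grid d n" and "p \<noteq> q"
  shows "grid_box d n p \<inter> grid_box d n q = {}"
proof (rule ccontr)
  assume "grid_box d n p \<inter> grid_box d n q \<noteq> {}"
  then obtain x where xp: "x \<in> grid_box d n p" and xq: "x \<in> grid_box d n q"
    by blast
  have "fst p i = fst q i" if i: "i < d" for i
  proof -
    obtain k l :: int where k: "fst p i = of_int k / real n" and l: "fst q i = of_int l / real n"
      using p q i n grid_coordsE by (metis grid_iff)
    have "fst x i \<in> {fst p i ..< fst p i + 1 / real n}" "fst x i \<in> {fst q i ..< fst q i + 1 / real n}"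
      using xp xq i by (auto simp: grid_box_def mem_Times_iff PiE_iff)
    then have "of_int k \<le> real n * fst x i" "real n * fst x i < of_int k + 1"
      "of_int l \<le> real n * fst x i" "real n * fst x i < of_int l + 1"
      using n unfolding k l by (auto simp: field_simps)
    then have "k = l"
      by linarith
    then show ?thesis
      using k l by simp
  qed
  moreover have "snd p = snd q"
    using xp xq by (simp add: grid_box_def mem_Times_iff)
  ultimately show False
    using assms grid_subset_tcarrier tcarrier_eqI by blast
qed

lemma card_grid_le_measure:
  assumes n: "n > 0" and S: "finite S" "S \<subseteq> grid d n"
    and V: "V \<in> sets (haar d)" "sumset d S (grid_cell d n) \<subseteq> V"
  shows "card S * ((1 / real n) ^ d / CARD('z)) \<le> measure (haar d :: ((nat \<Rightarrow> real) \<times> 'z::{ab_group_add,finite}) measure) V"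
proof -
  interpret prob_space "haar d :: ((nat \<Rightarrow> real) \<times> 'z) measure"
    by (rule prob_space_haar)
  have boxes: "grid_box d n ` S \<subseteq> sets (haar d)"
    using grid_box_measure(1)[OF n] S(2) by blast
  have "disjoint_family_on (grid_box d n) S"
    unfolding disjoint_family_on_def using S(2) grid_box_disjoint[OF n] by blast
  then have "(\<Sum>p\<in>S. measure (haar d) (grid_box d n p)) = measure (haar d) (\<Union>p\<in>S. grid_box d n p)"
    using S(1) boxes by (intro measure_finite_Union[symmetric]) auto
  also have "\<dots> \<le> measure (haar d) V"
  proof (rule finite_measure_mono[OF _ V(1)])
    show "(\<Union>p\<in>S. grid_box d n p) \<subseteq> V"
      using V(2) S(2) grid_box_subset_sumset_grid_cell[OF n] sumset_UN_singleton[of d S] by blast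
  qed
  finally have "(\<Sum>p\<in>S. measure (haar d) (grid_box d n p)) \<le> measure (haar d) V" .
  moreover have "measure (haar d) (grid_box d n p :: ((nat \<Rightarrow> real) \<times> 'z) set) = (1 / real n) ^ d / CARD('z)"
    if "p \<in> S" for p
    using grid_box_measure(2)[OF n] S(2) that by blast
  ultimately show ?thesis
    by simp
qed

lemma isCont_coordinate: "isCont (\<lambda>v::nat \<Rightarrow> real. v i) v"
  using continuous_on_eq_continuous_at[of UNIV "\<lambda>v::nat \<Rightarrow> real. v i"] by simp

lemma closed_coordinates_vanish: "closed {v :: nat \<Rightarrow> real. \<forall>i\<ge>d. v i = 0}"
proof -
  have "{v :: nat \<Rightarrow> real. \<forall>i\<ge>d. v i = 0} = (\<Inter>i\<in>{d..}. (\<lambda>v. v i) -` {0})"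
    by auto
  then show ?thesis
    by (auto intro!: closed_INT continuous_closed_vimage isCont_coordinate)
qed

lemma tclosed_sumset_grid_cell:
  assumes n: "n > 0" and S: "finite S" "S \<subseteq> tcarrier d"
  shows "tclosed d (sumset d S (grid_cell d n))"
  unfolding tclosed_def
proof (intro conjI allI)
  fix z
  have fibre: "(tproj d v, z) \<in> sumset d S (grid_cell d n) \<longleftrightarrow>
      (\<exists>p\<in>{p \<in> S. snd p = z}. \<forall>i<d. frac (v i - fst p i) \<le> 1 / real n)" for v
  proof -
    have pS: "p \<in> tcarrier d" if "p \<in> S" for p
      using S(2) that by blast
    have "(tproj d v, z) \<in> sumset d S (grid_cell d n) \<longleftrightarrow>
        (\<exists>p\<in>S. (tproj d v, z) \<in> PiE {..<d} (\<lambda>i. arc (fst p i) (1 / real n)) \<times> {snd p})"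
      unfolding sumset_UN_singleton[of d S] UN_iff
      by (intro bex_cong refl) (simp add: sumset_singleton_grid_cell[OF n pS])
    also have "\<dots> \<longleftrightarrow> (\<exists>p\<in>{p \<in> S. snd p = z}. \<forall>i<d. frac (v i - fst p i) \<le> 1 / real n)"
      by (auto simp: mem_Times_iff mem_torus_PiE_iff tproj_in_torus arc_def frac_frac_diff frac_lt_1)
        (metis fst_conv snd_conv)
    finally show ?thesis .
  qed
  have "closed {v::nat \<Rightarrow> real. frac (v i - c) \<le> w}" for i c w
    using continuous_closed_vimage[OF closed_frac_le[of w], of "\<lambda>v::nat \<Rightarrow> real. v i - c"]
    by (simp add: vimage_def continuous_intros isCont_coordinate)
  then have "closed (\<Union>p\<in>{p \<in> S. snd p = z}. \<Inter>i\<in>{..<d}. {v. frac (v i - fst p i) \<le> 1 / real n})"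
    using S(1) by (intro closed_UN closed_INT ballI) auto
  then have "closed ({v::nat \<Rightarrow> real. \<forall>i\<ge>d. v i = 0} \<inter>
      (\<Union>p\<in>{p \<in> S. snd p = z}. \<Inter>i\<in>{..<d}. {v. frac (v i - fst p i) \<le> 1 / real n}))"
    by (intro closed_Int closed_coordinates_vanish)
  moreover have "{v. (\<forall>i\<ge>d. v i = 0) \<and> (tproj d v, z) \<in> sumset d S (grid_cell d n)} =
      {v::nat \<Rightarrow> real. \<forall>i\<ge>d. v i = 0} \<inter>
      (\<Union>p\<in>{p \<in> S. snd p = z}. \<Inter>i\<in>{..<d}. {v. frac (v i - fst p i) \<le> 1 / real n})"
    unfolding fibre by auto
  ultimately show "closed {v. (\<forall>i\<ge>d. v i = 0) \<and> (tproj d v, z) \<in> sumset d S (grid_cell d n)}"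
    by simp
qed (rule sumset_subset_tcarrier)

lemma (in finite_measure) ex_measure_decseq_less:
  assumes V: "\<And>j. V j \<in> sets M" "decseq V" and S: "S \<in> sets M" "(\<Inter>j. V j) \<subseteq> S" "measure M S < c"
  shows "\<exists>J. measure M (V J) < c"
proof -
  have "(\<lambda>j. measure M (V j)) \<longlonglongrightarrow> measure M (\<Inter>j. V j)"
    using V by (intro finite_Lim_measure_decseq) auto
  moreover have "measure M (\<Inter>j. V j) < c"
    using S by (meson finite_measure_mono le_less_trans)
  ultimately have "eventually (\<lambda>j. measure M (V j) < c) sequentially"
    by (rule order_tendstoD(2))
  then show ?thesis
    by (auto simp: eventually_sequentially)
qed

subsection \<open>Thickenings of \<open>A + B\<close>\<close>

lemma compact_subseq_constant:
  fixes f :: "nat \<Rightarrow> 'a::first_countable_topology" and g :: "nat \<Rightarrow> 'b::finite"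
  assumes "compact K" "\<And>n. f n \<in> K"
  obtains \<sigma> l z where "strict_mono \<sigma>" "(f \<circ> \<sigma>) \<longlonglongrightarrow> l" "\<And>n. g (\<sigma> n) = z"
proof -
  obtain z where "infinite (g -` {z})"
    using inf_img_fin_domE[of g UNIV] by auto
  then have "\<exists>\<tau>::nat \<Rightarrow> nat. strict_mono \<tau> \<and> (\<forall>n. \<tau> n \<in> g -` {z})"
    by (rule infinite_enumerate)
  then obtain \<tau> :: "nat \<Rightarrow> nat" where \<tau>: "strict_mono \<tau>" "\<forall>n. \<tau> n \<in> g -` {z}"
    by blast
  have "\<forall>n. (f \<circ> \<tau>) n \<in> K"
    using assms(2) by simp
  then obtain l \<rho> where "l \<in> K" "strict_mono \<rho>" "((f \<circ> \<tau>) \<circ> \<rho>) \<longlonglongrightarrow> l"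
    by (rule seq_compactE[OF compact_imp_seq_compact[OF assms(1)]])
  with \<tau> show ?thesis
    using that[of "\<tau> \<circ> \<rho>" l z] by (simp add: strict_mono_o o_assoc)
qed

definition tlift :: "nat \<Rightarrow> (nat \<Rightarrow> real) \<Rightarrow> nat \<Rightarrow> real" where
  "tlift d p = (\<lambda>i. if i < d then p i else 0)"

lemma tproj_tlift: "p \<in> torus d \<Longrightarrow> tproj d (tlift d p) = p"
  using torus_coord[of p d] by (intro torus_eqI) (auto simp: tproj_in_torus tlift_def)

lemma tlift_in_unit_cube: "p \<in> torus d \<Longrightarrow> tlift d p \<in> PiE UNIV (\<lambda>i. if i < d then {0..1} else {0})"
  using torus_coord[of p d] by (auto simp: tlift_def less_imp_le)

lemma compact_unit_cube: "compact (PiE UNIV (\<lambda>i::nat. if i < d then {0..1::real} else {0}))"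
proof -
  have "compactin (product_topology (\<lambda>i. euclidean) UNIV) (PiE UNIV (\<lambda>i::nat. if i < d then {0..1::real} else {0}))"
    unfolding compactin_PiE by auto
  then show ?thesis
    by (simp add: euclidean_product_topology)
qed

lemma tclosed_tendsto:
  assumes S: "tclosed d S" and p: "\<And>n. (p n, z) \<in> S" and lim: "(\<lambda>n. tlift d (p n)) \<longlonglongrightarrow> u"
  shows "(tproj d u, z) \<in> S"
proof -
  have torus: "p n \<in> torus d" for n
    using S p[of n] by (auto simp: tclosed_def)
  have "tlift d (p n) \<in> {v. (\<forall>i\<ge>d. v i = 0) \<and> (tproj d v, z) \<in> S}" for n
    unfolding mem_Collect_eq tproj_tlift[OF torus] using p by (simp add: tlift_def)
  moreover have "closed {v. (\<forall>i\<ge>d. v i = 0) \<and> (tproj d v, z) \<in> S}"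
    using S by (simp add: tclosed_def)
  ultimately show ?thesis
    using closed_sequentially[OF _ _ lim] by blast
qed

lemma frac_tendsto_const:
  fixes y :: "nat \<Rightarrow> real"
  assumes "\<And>n. frac (y n) = c" "y \<longlonglongrightarrow> l"
  shows "frac l = c"
proof -
  have ints: "y n - c \<in> \<int>" and c: "0 \<le> c" "c < 1" for n
    using assms(1)[of n] by (simp_all only: frac_unique_iff)
  have "l - c \<in> \<int>"
  proof (rule closed_sequentially[OF closed_Ints])
    show "y n - c \<in> \<int>" for n
      by (rule ints)
    show "(\<lambda>n. y n - c) \<longlonglongrightarrow> l - c"
      by (intro tendsto_diff assms(2) tendsto_const)
  qed
  with \<open>0 \<le> c\<close> \<open>c < 1\<close> show ?thesis
    by (simp add: frac_unique_iff)
qed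

lemma frac_tendsto_sum:
  fixes a b v \<rho> :: "nat \<Rightarrow> real"
  assumes "\<And>n. frac (a n + b n + v n) = c" "a \<longlonglongrightarrow> \<alpha>" "b \<longlonglongrightarrow> \<beta>"
    and "\<And>n. \<bar>v n\<bar> \<le> \<rho> n" "\<rho> \<longlonglongrightarrow> 0"
  shows "frac (\<alpha> + \<beta>) = c"
proof -
  have "\<forall>n. norm (v n) \<le> \<rho> n"
    using assms(4) by simp
  then have "v \<longlonglongrightarrow> 0"
    using assms(5) by (rule Lim_null_comparison[OF always_eventually])
  then show ?thesis
    using frac_tendsto_const[OF assms(1) tendsto_add[OF tendsto_add[OF assms(2,3)] \<open>v \<longlonglongrightarrow> 0\<close>]] by simp
qed

text \<open>Compactness enters here: representatives of \<open>x\<close> as sums have a convergent subsequence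
  whose \<open>Z\<close>-components are constant.\<close>

lemma mem_sumset_if_mem_thickenings:
  fixes A B :: "((nat \<Rightarrow> real) \<times> 'z::{ab_group_add,finite}) set"
  assumes A: "tclosed d A" and B: "tclosed d B" and \<rho>: "\<rho> \<longlonglongrightarrow> 0"
    and x: "\<And>j. x \<in> sumset d (sumset d A B) (tcube d (\<rho> j))"
  shows "x \<in> sumset d A B"
proof -
  have "\<exists>a b v. a \<in> A \<and> b \<in> B \<and> (\<forall>i<d. \<bar>v i\<bar> \<le> \<rho> j) \<and> x = gadd d (gadd d a b) (tproj d v, 0)" for j
    using x[of j] unfolding tcube_def by (blast elim: sumsetE)
  then obtain a b v where ab: "\<And>j. a j \<in> A" "\<And>j. b j \<in> B"
    and v: "\<And>j i. i < d \<Longrightarrow> \<bar>v j i\<bar> \<le> \<rho> j"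
    and x_eq: "\<And>j. x = gadd d (gadd d (a j) (b j)) (tproj d (v j), 0)"
    by metis
  have "a j \<in> tcarrier d" "b j \<in> tcarrier d" for j
    using A B ab unfolding tclosed_def by blast+
  then have torus: "fst (a j) \<in> torus d" "fst (b j) \<in> torus d" for j
    by (simp_all add: mem_Times_iff)
  let ?K = "PiE UNIV (\<lambda>i::nat. if i < d then {0..1::real} else {0})"
  obtain \<sigma> u w z where \<sigma>: "strict_mono \<sigma>"
    and lim: "((\<lambda>j. (tlift d (fst (a j)), tlift d (fst (b j)))) \<circ> \<sigma>) \<longlonglongrightarrow> (u, w)"
    and z: "\<And>n. snd (a (\<sigma> n)) = z"
    by (rule compact_subseq_constant[of "?K \<times> ?K" "\<lambda>j. (tlift d (fst (a j)), tlift d (fst (b j)))"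
          "\<lambda>j. snd (a j)"])
      (auto intro!: compact_Times compact_unit_cube tlift_in_unit_cube torus)
  have lim_a: "(\<lambda>n. tlift d (fst (a (\<sigma> n)))) \<longlonglongrightarrow> u" and lim_b: "(\<lambda>n. tlift d (fst (b (\<sigma> n)))) \<longlonglongrightarrow> w"
    using tendsto_fst[OF lim] tendsto_snd[OF lim] by (simp_all add: o_def)
  have "a (\<sigma> n) = (fst (a (\<sigma> n)), z)" "b (\<sigma> n) = (fst (b (\<sigma> n)), snd x - z)" for n
    using z[of n] x_eq[of "\<sigma> n"] by (simp_all add: prod_eq_iff)
  then have "(fst (a (\<sigma> n)), z) \<in> A" "(fst (b (\<sigma> n)), snd x - z) \<in> B" for n
    using ab by metis+
  then have a_lim: "(tproj d u, z) \<in> A" and b_lim: "(tproj d w, snd x - z) \<in> B"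
    using tclosed_tendsto[OF A _ lim_a] tclosed_tendsto[OF B _ lim_b] by blast+
  have "fst x i = frac (u i + w i)" if i: "i < d" for i
  proof (rule frac_tendsto_sum[symmetric])
    show "frac (fst (a (\<sigma> n)) i + fst (b (\<sigma> n)) i + v (\<sigma> n) i) = fst x i" for n
      using x_eq[of "\<sigma> n"] i by (simp add: fst_gadd)
    show "(\<lambda>n. fst (a (\<sigma> n)) i) \<longlonglongrightarrow> u i" "(\<lambda>n. fst (b (\<sigma> n)) i) \<longlonglongrightarrow> w i"
      using isCont_tendsto_compose[OF isCont_coordinate[where i=i] lim_a]
        isCont_tendsto_compose[OF isCont_coordinate[where i=i] lim_b] i
      by (simp_all add: tlift_def)
    show "\<bar>v (\<sigma> n) i\<bar> \<le> \<rho> (\<sigma> n)" for n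
      using v[OF i] .
    show "(\<lambda>n. \<rho> (\<sigma> n)) \<longlonglongrightarrow> 0"
      using LIMSEQ_subseq_LIMSEQ[OF \<rho> \<sigma>] by (simp add: o_def)
  qed
  then have "x = gadd d (tproj d u, z) (tproj d w, snd x - z)"
    using x_eq[of 0] by (intro tcarrier_eqI[of _ d]) (auto simp: gadd_in_tcarrier fst_gadd)
  then show ?thesis
    by (rule ssubst) (rule sumsetI[OF a_lim b_lim])
qed

lemma exists_thickening_measure_less:
  fixes A B :: "((nat \<Rightarrow> real) \<times> 'z::{ab_group_add,finite}) set"
  assumes A: "tclosed d A" and B: "tclosed d B"
    and AB: "sumset d A B \<in> sets (haar d)" "measure (haar d) (sumset d A B) < c"
  shows "\<exists>r>0. \<exists>V\<in>sets (haar d). sumset d (sumset d A B) (tcube d r) \<subseteq> V \<and> measure (haar d) V < c"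
proof -
  interpret prob_space "haar d :: ((nat \<Rightarrow> real) \<times> 'z) measure"
    by (rule prob_space_haar)
  define W where "W j = sumset d (sumset d A B) (tcube d (1 / real (Suc j)))" for j
  define U where "U j = sumset d (grid_floor d (Suc j) ` W j) (grid_cell d (Suc j))" for j
  define V where "V j = (\<Inter>i\<le>j. U i)" for j
  have W: "W j \<subseteq> tcarrier d" for j
    by (simp add: W_def sumset_subset_tcarrier)
  have floors: "finite (grid_floor d (Suc j) ` W j)" "grid_floor d (Suc j) ` W j \<subseteq> tcarrier d" for j
    using finite_grid_floor_image[OF zero_less_Suc W]
      subset_trans[OF grid_floor_image_subset_grid[OF zero_less_Suc W] grid_subset_tcarrier] by blast+
  have U_sets: "U j \<in> events" for j
    unfolding U_def by (rule measure_sumset_grid_cell_le(1)[OF _ floors]) simp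
  have V_sets: "V j \<in> events" for j
    unfolding V_def by (intro sets.finite_INT U_sets) auto
  have "U j \<subseteq> sumset d (sumset d A B) (tcube d (3 / real (Suc j)))" for j
  proof -
    have "U j \<subseteq> sumset d (W j) (tcube d (2 / real (Suc j)))"
      unfolding U_def by (rule sumset_grid_floor_cell_subset[OF zero_less_Suc W])
    also have "\<dots> \<subseteq> sumset d (sumset d A B) (tcube d (1 / real (Suc j) + 2 / real (Suc j)))"
      unfolding W_def by (rule sumset_sumset_tcube)
    finally show ?thesis
      by (simp add: add_divide_distrib[symmetric])
  qed
  then have "(\<Inter>j. V j) \<subseteq> sumset d A B"
    using mem_sumset_if_mem_thickenings[OF A B lim_const_over_n[THEN LIMSEQ_Suc, of 3]]
    by (force simp: V_def)
  moreover have "decseq V"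
    by (rule decseq_SucI) (auto simp: V_def)
  ultimately obtain J where J: "prob (V J) < c"
    using ex_measure_decseq_less[where V = V, OF V_sets _ AB(1) _ AB(2)] by blast
  have "W J \<subseteq> U i" if "i \<le> J" for i
  proof -
    have "W J \<subseteq> W i"
      unfolding W_def using that by (intro sumset_mono tcube_mono order_refl) (simp add: frac_le)
    also have "\<dots> \<subseteq> U i"
      unfolding U_def by (rule subset_sumset_grid_floor_cell[OF _ W]) simp
    finally show ?thesis .
  qed
  then have "W J \<subseteq> V J"
    by (auto simp: V_def)
  then show ?thesis
    using J V_sets[of J] by (intro exI[of _ "1 / real (Suc J)"]) (auto simp: W_def)
qed

subsection \<open>Discretisation on a grid\<close>

lemma measure_le_card_grid_floor:
  fixes A :: "((nat \<Rightarrow> real) \<times> 'z::{ab_group_add,finite}) set"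
  assumes "n > 0" "A \<subseteq> tcarrier d"
  shows "measure (haar d) A \<le> card (grid_floor d n ` A) * ((1 / real n) ^ d / CARD('z))"
proof -
  interpret prob_space "haar d :: ((nat \<Rightarrow> real) \<times> 'z) measure"
    by (rule prob_space_haar)
  have floors: "finite (grid_floor d n ` A)" "grid_floor d n ` A \<subseteq> tcarrier d"
    using finite_grid_floor_image[OF assms]
      subset_trans[OF grid_floor_image_subset_grid[OF assms] grid_subset_tcarrier] by blast+
  have "prob A \<le> prob (sumset d (grid_floor d n ` A) (grid_cell d n))"
    using measure_sumset_grid_cell_le(1)[OF assms(1) floors] subset_sumset_grid_floor_cell[OF assms]
    by (rule finite_measure_mono[rotated])
  also have "\<dots> \<le> card (grid_floor d n ` A) * ((1 / real n) ^ d / CARD('z))"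
    by (rule measure_sumset_grid_cell_le(2)[OF assms(1) floors])
  finally show ?thesis .
qed

lemma measure_sumset_msumset_le:
  fixes X B :: "((nat \<Rightarrow> real) \<times> 'z::{ab_group_add,finite}) set"
  assumes n: "n > 0" and X: "finite X" "X \<subseteq> tcarrier d" and B: "B \<subseteq> tcarrier d"
  shows "measure (haar d) (sumset d (sumset d X (grid_cell d n)) (msumset d m B))
    \<le> card (sumset d X (msumset d m (sumset d (grid_floor d n ` B) (grid_corners d n))))
      * ((1 / real n) ^ d / CARD('z))"
proof -
  interpret prob_space "haar d :: ((nat \<Rightarrow> real) \<times> 'z) measure"
    by (rule prob_space_haar)
  let ?S = "sumset d X (msumset d m (sumset d (grid_floor d n ` B) (grid_corners d n)))"
  have "finite (sumset d (grid_floor d n ` B) (grid_corners d n))"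
    by (intro finite_sumset finite_grid_floor_image[OF n B] finite_subset[OF grid_corners_subset_grid[OF n] finite_grid[OF n]])
  then have S: "finite ?S" "?S \<subseteq> tcarrier d"
    using X by (simp_all add: finite_sumset finite_msumset sumset_subset_tcarrier)
  have "prob (sumset d (sumset d X (grid_cell d n)) (msumset d m B)) \<le> prob (sumset d ?S (grid_cell d n))"
    using measure_sumset_grid_cell_le(1)[OF n S] sumset_grid_cell_msumset[OF n B X(2)]
    by (rule finite_measure_mono[rotated])
  also have "\<dots> \<le> card ?S * ((1 / real n) ^ d / CARD('z))"
    by (rule measure_sumset_grid_cell_le(2)[OF n S])
  finally show ?thesis .
qed

lemma sumset_grid_floors_subset_thickening:
  assumes k: "k > 0" and A: "A \<subseteq> tcarrier d" and B: "B \<subseteq> tcarrier d"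
  shows "sumset d (sumset d (grid_floor d k ` A) (sumset d (grid_floor d k ` B) (grid_corners d k))) (grid_cell d k)
    \<subseteq> sumset d (sumset d A B) (tcube d (4 / real k))"
proof -
  let ?Q = "tcube d (1 / real k)" and ?r = "1 / real k"
  have "sumset d (sumset d (grid_floor d k ` A) (sumset d (grid_floor d k ` B) (grid_corners d k))) (grid_cell d k)
      \<subseteq> sumset d (sumset d (sumset d A ?Q) (sumset d (sumset d B ?Q) ?Q)) ?Q"
    by (intro sumset_mono grid_floor_image_subset[OF k] A B grid_corners_subset_tcube[OF k]
        grid_cell_subset_tcube)
  also have "\<dots> = sumset d (sumset d A B) (sumset d (sumset d ?Q ?Q) (sumset d ?Q ?Q))"
    by (simp only: sumset_ac)
  also have "\<dots> \<subseteq> sumset d (sumset d A B) (sumset d (tcube d (?r + ?r)) (tcube d (?r + ?r)))"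
    by (intro sumset_mono order_refl sumset_tcube)
  also have "\<dots> \<subseteq> sumset d (sumset d A B) (tcube d (?r + ?r + (?r + ?r)))"
    by (intro sumset_mono order_refl sumset_tcube)
  also have "\<dots> = sumset d (sumset d A B) (tcube d (4 / real k))"
    by (simp add: add_divide_distrib[symmetric])
  finally show ?thesis .
qed

lemma measure_sumset_grid_cells_le:
  fixes X B :: "((nat \<Rightarrow> real) \<times> 'z::{ab_group_add,finite}) set" and K :: real
  assumes k: "k > 0" and X: "finite X" "X \<subseteq> grid d k" and B: "B \<subseteq> tcarrier d" and K: "0 \<le> K"
    and count: "card (sumset d X (msumset d m (sumset d (grid_floor d k ` B) (grid_corners d k)))) \<le> K ^ m * card X"
  shows "measure (haar d) (sumset d (sumset d X (grid_cell d k)) (msumset d m B))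
    \<le> K ^ m * measure (haar d) (sumset d X (grid_cell d k))"
proof -
  define vol :: real where "vol = (1 / real k) ^ d / CARD('z)"
  have vol: "vol > 0"
    using k by (simp add: vol_def)
  have X_tcarrier: "X \<subseteq> tcarrier d"
    using X(2) grid_subset_tcarrier by (rule subset_trans)
  have "measure (haar d) (sumset d (sumset d X (grid_cell d k)) (msumset d m B))
      \<le> card (sumset d X (msumset d m (sumset d (grid_floor d k ` B) (grid_corners d k)))) * vol"
    unfolding vol_def by (rule measure_sumset_msumset_le[OF k X(1) X_tcarrier B])
  also have "\<dots> \<le> K ^ m * (card X * vol)"
    using mult_right_mono[OF count less_imp_le[OF vol]] by (simp add: mult.assoc)
  also have "\<dots> \<le> K ^ m * measure (haar d) (sumset d X (grid_cell d k))"
    unfolding vol_def using K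
    by (intro mult_left_mono card_grid_le_measure[OF k X] measure_sumset_grid_cell_le(1)[OF k X(1) X_tcarrier])
      simp_all
  finally show ?thesis .
qed

lemma exists_closed_plunnecke_subset:
  fixes A B :: "((nat \<Rightarrow> real) \<times> 'z::{ab_group_add,finite}) set"
  assumes A: "A \<subseteq> tcarrier d" "A \<noteq> {}" and B: "B \<subseteq> tcarrier d" and k: "k > 0" and K: "0 \<le> K"
    and V: "V \<in> sets (haar d)" "sumset d (sumset d A B) (tcube d r) \<subseteq> V" and r: "4 / real k \<le> r"
    and VA: "measure (haar d) V \<le> K * measure (haar d) A"
  shows "\<exists>A'. A' \<subseteq> sumset d A (tcube d (2 / real k)) \<and> A' \<noteq> {} \<and> tclosed d A' \<and>
    (\<forall>m. measure (haar d) (sumset d A' (msumset d m B)) \<le> K ^ m * measure (haar d) A')"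
proof -
  let ?\<mu> = "measure (haar d) :: ((nat \<Rightarrow> real) \<times> 'z) set \<Rightarrow> real"
  define vol :: real where "vol = (1 / real k) ^ d / CARD('z)"
  define D where "D = grid_floor d k ` A"
  define Bd where "Bd = sumset d (grid_floor d k ` B) (grid_corners d k)"
  have vol: "vol > 0"
    using k by (simp add: vol_def)
  have D: "finite D" "D \<noteq> {}" "D \<subseteq> grid d k"
    using finite_grid_floor_image[OF k A(1)] A(2) grid_floor_image_subset_grid[OF k A(1)] by (auto simp: D_def)
  have Bd: "finite Bd" "Bd \<subseteq> grid d k"
    using finite_subset[OF _ finite_grid[OF k]] sumset_subset_grid[OF k grid_floor_image_subset_grid[OF k B]
        grid_corners_subset_grid[OF k]] by (auto simp: Bd_def)
  have DBd: "finite (sumset d D Bd)" "sumset d D Bd \<subseteq> grid d k"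
    using D Bd by (simp_all add: finite_sumset sumset_subset_grid[OF k])
  obtain X where X: "X \<subseteq> D" "X \<noteq> {}"
    and plunnecke: "\<And>m. card (sumset d X (msumset d m Bd)) \<le> (card (sumset d D Bd) / card D) ^ m * card X"
    using plunnecke_subset_torus[OF D(1,2) subset_trans[OF D(3) grid_subset_tcarrier]
        Bd(1) subset_trans[OF Bd(2) grid_subset_tcarrier]] by blast
  have X_grid: "finite X" "X \<subseteq> grid d k"
    using X D finite_subset by auto
  have "sumset d (sumset d A B) (tcube d (4 / real k)) \<subseteq> V"
    using sumset_mono[OF order_refl tcube_mono[OF r]] V(2) by (rule subset_trans)
  then have "card (sumset d D Bd) * vol \<le> ?\<mu> V"
    unfolding vol_def using sumset_grid_floors_subset_thickening[OF k A(1) B]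
    by (intro card_grid_le_measure[OF k DBd V(1)]) (auto simp: D_def Bd_def)
  also have "\<dots> \<le> K * (card D * vol)"
    using VA mult_left_mono[OF measure_le_card_grid_floor[OF k A(1)] K] by (simp add: D_def vol_def)
  finally have ratio: "card (sumset d D Bd) / card D \<le> K"
    using vol D(1,2) by (simp add: field_simps card_gt_0_iff)
  have "(card (sumset d D Bd) / card D) ^ m \<le> K ^ m" for m
    using ratio by (intro power_mono) auto
  then have "card (sumset d X (msumset d m Bd)) \<le> K ^ m * card X" for m
    using plunnecke[of m] by (meson mult_right_mono of_nat_0_le_iff order_trans)
  then have "measure (haar d) (sumset d (sumset d X (grid_cell d k)) (msumset d m B))
      \<le> K ^ m * measure (haar d) (sumset d X (grid_cell d k))" for m
    unfolding Bd_def by (rule measure_sumset_grid_cells_le[OF k X_grid B K])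
  moreover have "sumset d X (grid_cell d k) \<subseteq> sumset d A (tcube d (2 / real k))"
    using sumset_mono[OF X(1) order_refl] sumset_grid_floor_cell_subset[OF k A(1)]
    unfolding D_def by (rule subset_trans)
  moreover have "sumset d X (grid_cell d k) \<noteq> {}"
    using X(2) gzero_in_grid_cell by (blast intro: sumsetI)
  moreover have "tclosed d (sumset d X (grid_cell d k))"
    by (rule tclosed_sumset_grid_cell[OF k X_grid(1) subset_trans[OF X_grid(2) grid_subset_tcarrier]])
  ultimately show ?thesis
    by blast
qed

theorem theorem2p5:
  fixes d :: nat and \<alpha> :: real
    and A B :: "((nat \<Rightarrow> real) \<times> 'z::{ab_group_add,finite}) set"
  assumes "tclosed d A" and "tclosed d B"
    and "0 < measure (haar d) (sumset d A B)"
    and "measure (haar d) (sumset d A B) \<le> \<alpha> * measure (haar d) A"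
  shows "\<forall>\<epsilon>>0. \<exists>N. \<forall>n\<ge>N. n > 0 \<longrightarrow>
           (\<exists>A'. A' \<subseteq> sumset d A (cube d n) \<and> A' \<noteq> {} \<and> tclosed d A' \<and>
              (\<forall>m::nat. measure (haar d) (sumset d A' (msumset d m B))
                 \<le> (1 + \<epsilon>) ^ m * \<alpha> ^ m * measure (haar d) A'))"
proof (intro allI impI)
  fix \<epsilon> :: real assume \<epsilon>: "\<epsilon> > 0"
  let ?\<mu> = "measure (haar d) :: ((nat \<Rightarrow> real) \<times> 'z) set \<Rightarrow> real"
  have "0 < \<alpha> * ?\<mu> A"
    using assms(3,4) by linarith
  then have "0 < \<alpha>" "A \<noteq> {}"
    by (auto simp: zero_less_mult_iff measure_nonneg not_less[symmetric])
  have "sumset d A B \<in> sets (haar d)"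
    using assms(3) measure_notin_sets by fastforce
  moreover have "?\<mu> (sumset d A B) < (1 + \<epsilon>) * ?\<mu> (sumset d A B)"
    using assms(3) \<epsilon> by simp
  ultimately obtain r V where r: "r > 0" and V: "V \<in> sets (haar d)" "sumset d (sumset d A B) (tcube d r) \<subseteq> V"
    and "?\<mu> V < (1 + \<epsilon>) * ?\<mu> (sumset d A B)"
    using exists_thickening_measure_less[OF assms(1,2)] by blast
  then have VA: "?\<mu> V \<le> ((1 + \<epsilon>) * \<alpha>) * ?\<mu> A"
    using assms(4) \<epsilon> by (smt (verit) mult.assoc mult_left_mono)
  have "\<exists>A'. A' \<subseteq> sumset d A (tcube d (2 / real (2 * n))) \<and> A' \<noteq> {} \<and> tclosed d A' \<and>
      (\<forall>m. ?\<mu> (sumset d A' (msumset d m B)) \<le> ((1 + \<epsilon>) * \<alpha>) ^ m * ?\<mu> A')"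
    if "nat \<lceil>2 / r\<rceil> \<le> n" "n > 0" for n
    using that r assms(1,2) \<open>A \<noteq> {}\<close> \<epsilon> \<open>\<alpha> > 0\<close>
    by (intro exists_closed_plunnecke_subset[OF _ _ _ _ _ V _ VA]) (auto simp: tclosed_def field_simps)
  then show "\<exists>N. \<forall>n\<ge>N. n > 0 \<longrightarrow> (\<exists>A'. A' \<subseteq> sumset d A (cube d n) \<and> A' \<noteq> {} \<and> tclosed d A' \<and>
      (\<forall>m. ?\<mu> (sumset d A' (msumset d m B)) \<le> (1 + \<epsilon>) ^ m * \<alpha> ^ m * ?\<mu> A'))"
    by (intro exI[of _ "nat \<lceil>2 / r\<rceil>"]) (simp add: cube_eq_tcube power_mult_distrib)
qed

end
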